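(* Let $N\geq 2$ and let $\Sigma$ be the one-sided shift on $\{0,1,\dots,N-1\}^{\mathbb{N}_0}$, ordered lexicographically. Let $\pi\in\mathcal{S}_L$ be a spiralling pattern with $D$ segments $p_1<\dots<p_D$ of lengths $h_1,\dots,h_D$, where $h_1\geq 2$. Then $\pi$ is forbidden for $\Sigma$ if (a) $D\geq N$ and $h_D\geq 2$, or (b) $D\geq N+1$ and $h_D=1$; otherwise $\pi$ is allowed for $\Sigma$.
   Context: $\{0,1,\dots,N-1\}^{\mathbb{N}_0}$ is the set of sequences $\omega=(\omega_0,\omega_1,\dots)$ with $\omega_n\in\{0,\dots,N-1\}$, and $\Sigma(\omega_0,\omega_1,\dots)=(\omega_1,\omega_2,\dots)$; $\omega<\omega'$ lexicographically iff at the first index $n$ where they differ, $\omega_n<\omega'_n$. $\mathcal{S}_L$ is the set of permutations $\pi=[\pi_0,\dots,\pi_{L-1}]$ of $\{0,\dots,L-1\}$. $\omega$ defines $\pi$ if $\Sigma^{\pi_0}(\omega)<\dots<\Sigma^{\pi_{L-1}}(\omega)$; $\pi$ is allowed if some $\omega$ defines it and forbidden otherwise. A partition of $0,1,\dots,L-1$ into $D\geq 2$ segments is a splitting $p_1<p_2<\dots<p_D$ where $p_d$ is the increasing run $e_d,e_d+1,\dots,e_d+h_d-1$ with $h_d\geq1$, $h_1+\dots+h_D=L$, $e_1=0$ and $e_{d+1}=e_d+h_d$. The reversed segment is $\overleftarrow{p_d}=e_d+h_d-1,\dots,e_d+1,e_d$. A spiralling pattern of length $L$ is a pattern of the form $\pi=[\dots,\overleftarrow{p_5},\overleftarrow{p_3},\overleftarrow{p_1},p_2,p_4,\dots]$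 (all odd-indexed segments reversed, placed to the left in decreasing order of index, followed by all even-indexed segments in increasing order of index), or its mirrored pattern $[\dots,\overleftarrow{p_4},\overleftarrow{p_2},p_1,p_3,\dots]$ (even-indexed segments reversed on the left in decreasing order of index, then odd-indexed segments in increasing order of index). *)

theory Defs
  imports Main
begin

text \<open>Sequences in {0,...,N-1}^N0 are functions nat => nat with values below N.\<close>

definition shift :: "nat \<Rightarrow> (nat \<Rightarrow> nat) \<Rightarrow> (nat \<Rightarrow> nat)" where
  "shift k \<omega> = (\<lambda>n. \<omega> (n + k))"

definition lex_less :: "(nat \<Rightarrow> nat) \<Rightarrow> (nat \<Rightarrow> nat) \<Rightarrow> bool" where
  "lex_less \<omega> \<omega>' \<longleftrightarrow> (\<exists>n. (\<forall>i<n. \<omega> i = \<omega>' i) \<and> \<omega> n < \<omega>' n)"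

definition is_pattern :: "nat list \<Rightarrow> bool" where
  "is_pattern \<pi> \<longleftrightarrow> distinct \<pi> \<and> set \<pi> = {0..<length \<pi>}"

definition defines_pattern :: "(nat \<Rightarrow> nat) \<Rightarrow> nat list \<Rightarrow> bool" where
  "defines_pattern \<omega> \<pi> \<longleftrightarrow>
     (\<forall>i. Suc i < length \<pi> \<longrightarrow> lex_less (shift (\<pi> ! i) \<omega>) (shift (\<pi> ! Suc i) \<omega>))"

definition allowed :: "nat \<Rightarrow> nat list \<Rightarrow> bool" where
  "allowed N \<pi> \<longleftrightarrow> (\<exists>\<omega>. (\<forall>n. \<omega> n < N) \<and> defines_pattern \<omega> \<pi>)"

definition forbidden :: "nat \<Rightarrow> nat list \<Rightarrow> bool" where
  "forbidden N \<pi> \<longleftrightarrow> \<not> allowed N \<pi>"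

text \<open>Segments, 0-indexed: segment j (paper's p_{j+1}) of the partition with lengths hs.\<close>
definition seg :: "nat list \<Rightarrow> nat \<Rightarrow> nat list" where
  "seg hs j = [sum_list (take j hs) ..< sum_list (take j hs) + hs ! j]"

text \<open>Spiralling pattern [..., rev p5, rev p3, rev p1, p2, p4, ...]; paper index d = j+1,
  so odd d corresponds to even j.\<close>
definition spiral :: "nat list \<Rightarrow> nat list" where
  "spiral hs =
     concat (map (\<lambda>j. rev (seg hs j)) (rev (filter even [0..<length hs])))
     @ concat (map (seg hs) (filter odd [0..<length hs]))"

text \<open>Mirrored spiralling pattern [..., rev p4, rev p2, p1, p3, ...].\<close>
definition spiral_mirror :: "nat list \<Rightarrow> nat list" where
  "spiral_mirror hs =
     concat (map (\<lambda>j. rev (seg hs j)) (rev (filter odd [0..<length hs])))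
     @ concat (map (seg hs) (filter even [0..<length hs]))"

end

theory Submission
  imports Defs
begin

text \<open>Number the segments from 0 and give position \<open>x\<close> the key \<open>-x\<close> on even and \<open>x\<close> on odd
  segments; the spiral pattern lists the positions by increasing key, and the mirrored one is
  reduced to it by complementing the symbols. If \<open>t\<close> is the last position of a segment and
  \<open>x < t\<close>, then \<open>t + 1\<close> starts a segment on the other side, so the pairs \<open>(x, t)\<close> and
  \<open>(x + 1, t + 1)\<close> are ordered oppositely and \<open>\<omega> x \<noteq> \<omega> t\<close>. Hence the symbols at the ends of
  consecutive segments spiral outwards, the \<open>m\<close>-th step having length at least \<open>m\<close>; this forces
  \<open>D \<le> N\<close>, and if \<open>N = D\<close> the spiral reaches an extreme symbol beyond which a last segment
  of length at least two cannot go. Conversely, the word whose symbols move one step away from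
  a central value every two segments, the last symbol of each segment already taking the value
  of the next segment on its side, defines the pattern: two positions with equal symbols are
  followed by successors in the same spiral order, except at the end of the word, where the
  constant tail decides.\<close>

section \<open>Lexicographic order of shifted sequences\<close>

lemma lex_less_iff:
  "lex_less x y \<longleftrightarrow> x 0 < y 0 \<or> (x 0 = y 0 \<and> lex_less (\<lambda>n. x (Suc n)) (\<lambda>n. y (Suc n)))"
proof
  assume "lex_less x y"
  then obtain n where n: "\<forall>i<n. x i = y i" "x n < y n"
    unfolding lex_less_def by blast
  show "x 0 < y 0 \<or> (x 0 = y 0 \<and> lex_less (\<lambda>n. x (Suc n)) (\<lambda>n. y (Suc n)))"
  proof (cases n)
    case (Suc m)
    then have "lex_less (\<lambda>n. x (Suc n)) (\<lambda>n. y (Suc n))"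
      unfolding lex_less_def using n by (intro exI[of _ m]) auto
    with n Suc show ?thesis by auto
  qed (use n in simp)
next
  assume "x 0 < y 0 \<or> (x 0 = y 0 \<and> lex_less (\<lambda>n. x (Suc n)) (\<lambda>n. y (Suc n)))"
  then show "lex_less x y"
  proof
    assume "x 0 < y 0"
    then show ?thesis unfolding lex_less_def by (intro exI[of _ 0]) auto
  next
    assume *: "x 0 = y 0 \<and> lex_less (\<lambda>n. x (Suc n)) (\<lambda>n. y (Suc n))"
    then obtain n where n: "\<forall>i<n. x (Suc i) = y (Suc i)" "x (Suc n) < y (Suc n)"
      unfolding lex_less_def by blast
    have "\<forall>i<Suc n. x i = y i"
      using * n by (auto simp: less_Suc_eq_0_disj)
    with n show ?thesis unfolding lex_less_def by blast
  qed
qed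

lemma lex_less_irrefl: "\<not> lex_less x x"
  unfolding lex_less_def by auto

lemma lex_less_trans:
  assumes "lex_less x y" "lex_less y z"
  shows "lex_less x z"
proof -
  obtain n where n: "\<forall>i<n. x i = y i" "x n < y n"
    using assms(1) unfolding lex_less_def by blast
  obtain m where m: "\<forall>i<m. y i = z i" "y m < z m"
    using assms(2) unfolding lex_less_def by blast
  show ?thesis unfolding lex_less_def
  proof (cases "n < m")
    case True
    with n m have "(\<forall>i<n. x i = z i) \<and> x n < z n" by simp
    then show "\<exists>k. (\<forall>i<k. x i = z i) \<and> x k < z k" by blast
  next
    case False
    with n have "x m \<le> y m" by (cases "n = m") auto
    with n(1) m False have "(\<forall>i<m. x i = z i) \<and> x m < z m" by simp
    then show "\<exists>k. (\<forall>i<k. x i = z i) \<and> x k < z k" by blast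
  qed
qed

lemma lex_less_asym: "lex_less x y \<Longrightarrow> \<not> lex_less y x"
  using lex_less_trans lex_less_irrefl by blast

lemma lex_less_const_top:
  assumes "\<forall>n. x n \<le> M" and "x i < M"
  shows "lex_less x (\<lambda>_. M)"
proof -
  obtain n where "x n < M" and "\<forall>m<n. \<not> x m < M"
    using assms(2) exists_least_iff[of "\<lambda>n. x n < M"] by blast
  moreover have "\<forall>m<n. x m = M"
    using calculation(2) assms(1) by (meson antisym_conv2)
  ultimately show ?thesis
    unfolding lex_less_def by blast
qed

lemma lex_less_const_zero:
  assumes "0 < x i"
  shows "lex_less (\<lambda>_. 0) x"
proof -
  obtain n where "0 < x n" and "\<forall>m<n. \<not> 0 < x m"
    using assms exists_least_iff[of "\<lambda>n. 0 < x n"] by blast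
  then show ?thesis
    unfolding lex_less_def by (intro exI[of _ n]) simp
qed

lemma lex_less_shift_iff:
  "lex_less (shift p \<omega>) (shift q \<omega>) \<longleftrightarrow>
     \<omega> p < \<omega> q \<or> (\<omega> p = \<omega> q \<and> lex_less (shift (Suc p) \<omega>) (shift (Suc q) \<omega>))"
proof -
  have "shift p \<omega> 0 = \<omega> p" and "(\<lambda>n. shift p \<omega> (Suc n)) = shift (Suc p) \<omega>" for p
    by (simp_all add: shift_def)
  then show ?thesis
    by (subst lex_less_iff) simp
qed

lemma shift_diff: "p \<le> n \<Longrightarrow> shift p \<omega> (n - p) = \<omega> n"
  by (simp add: shift_def)

lemma lex_less_shift_imp_le: "lex_less (shift p \<omega>) (shift q \<omega>) \<Longrightarrow> \<omega> p \<le> \<omega> q"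
  using lex_less_shift_iff[of p \<omega> q] by auto

lemma not_lex_less_shift_Suc_if_max:
  assumes "\<forall>n. \<omega> n < N" and "\<omega> p = N - 1"
  shows "\<not> lex_less (shift p \<omega>) (shift (Suc p) \<omega>)"
proof
  assume "lex_less (shift p \<omega>) (shift (Suc p) \<omega>)"
  then obtain n where n: "\<forall>i<n. \<omega> (i + p) = \<omega> (i + Suc p)" "\<omega> (n + p) < \<omega> (n + Suc p)"
    unfolding lex_less_def shift_def by blast
  have "\<omega> (i + p) = N - 1" if "i \<le> n" for i
    using that
  proof (induction i)
    case (Suc i)
    then have "i < n" by simp
    have "\<omega> (Suc i + p) = \<omega> (i + Suc p)" by simp
    also have "\<dots> = \<omega> (i + p)" using n(1) \<open>i < n\<close> by metis
    also have "\<dots> = N - 1" using Suc by simp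
    finally show ?case .
  qed (use assms(2) in simp)
  then have "\<omega> (n + p) = N - 1" by blast
  with n(2) assms(1)[rule_format, of "n + Suc p"] show False by linarith
qed

lemma not_lex_less_shift_Suc_if_zero:
  assumes "\<omega> p = 0"
  shows "\<not> lex_less (shift (Suc p) \<omega>) (shift p \<omega>)"
proof
  assume "lex_less (shift (Suc p) \<omega>) (shift p \<omega>)"
  then obtain n where n: "\<forall>i<n. \<omega> (i + Suc p) = \<omega> (i + p)" "\<omega> (n + Suc p) < \<omega> (n + p)"
    unfolding lex_less_def shift_def by blast
  have "\<omega> (i + p) = 0" if "i \<le> n" for i
    using that
  proof (induction i)
    case (Suc i)
    then have "i < n" by simp
    have "\<omega> (Suc i + p) = \<omega> (i + Suc p)" by simp
    also have "\<dots> = \<omega> (i + p)" using n(1) \<open>i < n\<close> by blast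
    also have "\<dots> = 0" using Suc by simp
    finally show ?case .
  qed (use assms in simp)
  with n(2) show False by simp
qed

definition complement :: "nat \<Rightarrow> (nat \<Rightarrow> nat) \<Rightarrow> nat \<Rightarrow> nat" where
  "complement N \<omega> = (\<lambda>n. N - 1 - \<omega> n)"

lemma complement_less:
  assumes "\<forall>n. \<omega> n < N"
  shows "\<forall>n. complement N \<omega> n < N"
proof
  fix n
  show "complement N \<omega> n < N"
    using assms[rule_format, of n] unfolding complement_def by linarith
qed

lemma lex_less_shift_complement_iff:
  assumes "\<forall>n. \<omega> n < N"
  shows "lex_less (shift p (complement N \<omega>)) (shift q (complement N \<omega>)) \<longleftrightarrow>
           lex_less (shift q \<omega>) (shift p \<omega>)"
proof -
  have eq: "N - 1 - \<omega> a = N - 1 - \<omega> b \<longleftrightarrow> \<omega> b = \<omega> a"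
    and less: "N - 1 - \<omega> a < N - 1 - \<omega> b \<longleftrightarrow> \<omega> b < \<omega> a" for a b
  proof -
    have "\<omega> a < N" "\<omega> b < N" using assms by blast+
    then show "N - 1 - \<omega> a = N - 1 - \<omega> b \<longleftrightarrow> \<omega> b = \<omega> a"
      and "N - 1 - \<omega> a < N - 1 - \<omega> b \<longleftrightarrow> \<omega> b < \<omega> a" by linarith+
  qed
  show ?thesis
    unfolding lex_less_def shift_def complement_def by (simp only: eq less)
qed

section \<open>Patterns as key orders\<close>

definition defines_order :: "nat \<Rightarrow> (nat \<Rightarrow> int) \<Rightarrow> (nat \<Rightarrow> nat) \<Rightarrow> bool" where
  "defines_order L k \<omega> \<longleftrightarrow>
     (\<forall>p<L. \<forall>q<L. k p < k q \<longrightarrow> lex_less (shift p \<omega>) (shift q \<omega>))"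

lemma defines_pattern_iff_sorted_wrt:
  "defines_pattern \<omega> \<pi> \<longleftrightarrow> sorted_wrt (\<lambda>p q. lex_less (shift p \<omega>) (shift q \<omega>)) \<pi>"
proof -
  have "transp (\<lambda>p q. lex_less (shift p \<omega>) (shift q \<omega>))"
    by (rule transpI) (rule lex_less_trans)
  then show ?thesis
    unfolding defines_pattern_def by (simp add: sorted_wrt_iff_nth_Suc_transp)
qed

lemma defines_pattern_iff_defines_order:
  assumes sorted: "sorted_wrt (\<lambda>a b. k a < k b) \<pi>" and set: "set \<pi> = {0..<L}"
  shows "defines_pattern \<omega> \<pi> \<longleftrightarrow> defines_order L k \<omega>"
proof
  assume "defines_pattern \<omega> \<pi>"
  then have lex: "sorted_wrt (\<lambda>p q. lex_less (shift p \<omega>) (shift q \<omega>)) \<pi>"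
    by (simp add: defines_pattern_iff_sorted_wrt)
  show "defines_order L k \<omega>"
    unfolding defines_order_def
  proof (intro allI impI)
    fix p q assume "p < L" "q < L" "k p < k q"
    then obtain i j where ij: "i < length \<pi>" "\<pi> ! i = p" "j < length \<pi>" "\<pi> ! j = q"
      using set by (metis atLeastLessThan_iff in_set_conv_nth zero_le)
    have "i < j"
    proof (rule ccontr)
      assume "\<not> i < j"
      then have "k q \<le> k p"
        using ij sorted_wrt_nth_less[OF sorted, of j i] by (cases "i = j") auto
      with \<open>k p < k q\<close> show False by simp
    qed
    with ij show "lex_less (shift p \<omega>) (shift q \<omega>)"
      using sorted_wrt_nth_less[OF lex] by blast
  qed
next
  assume "defines_order L k \<omega>"
  then have "sorted_wrt (\<lambda>p q. lex_less (shift p \<omega>) (shift q \<omega>)) \<pi>"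
    using sorted_wrt_mono_rel[OF _ sorted] set unfolding defines_order_def by force
  then show "defines_pattern \<omega> \<pi>"
    by (simp add: defines_pattern_iff_sorted_wrt)
qed

lemma allowed_iff_defines_order:
  assumes "sorted_wrt (\<lambda>a b. k a < k b) \<pi>" and "set \<pi> = {0..<L}"
  shows "allowed N \<pi> \<longleftrightarrow> (\<exists>\<omega>. (\<forall>n. \<omega> n < N) \<and> defines_order L k \<omega>)"
  unfolding allowed_def defines_pattern_iff_defines_order[OF assms] ..

lemma defines_order_complement_iff:
  assumes "\<forall>n. \<omega> n < N"
  shows "defines_order L (\<lambda>x. - k x) (complement N \<omega>) \<longleftrightarrow> defines_order L k \<omega>"
  unfolding defines_order_def lex_less_shift_complement_iff[OF assms] by auto

lemma ex_defines_order_reverse_iff: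
  "(\<exists>\<omega>. (\<forall>n. \<omega> n < N) \<and> defines_order L (\<lambda>x. - k x) \<omega>) \<longleftrightarrow>
     (\<exists>\<omega>. (\<forall>n. \<omega> n < N) \<and> defines_order L k \<omega>)"
proof -
  have "\<exists>\<omega>'. (\<forall>n. \<omega>' n < N) \<and> defines_order L k' \<omega>'"
    if "\<forall>n. \<omega> n < N" "defines_order L (\<lambda>x. - k' x) \<omega>" for \<omega> and k' :: "nat \<Rightarrow> int"
    using complement_less[OF that(1)] that defines_order_complement_iff[of \<omega> N L "\<lambda>x. - k' x"]
    by auto
  from this[of _ k] this[of _ "\<lambda>x. - k x"] show ?thesis by auto
qed

section \<open>Segments and the spiral key\<close>

lemma spiral_mirror_eq_rev: "spiral_mirror hs = rev (spiral hs)"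
  unfolding spiral_mirror_def spiral_def by (simp add: rev_concat rev_map o_def)

lemma concat_map_if_Nil: "concat (map (\<lambda>j. if P j then f j else []) xs) = concat (map f (filter P xs))"
  by (induction xs) auto

locale spiral_partition =
  fixes hs :: "nat list"
  assumes pos: "\<forall>h\<in>set hs. 1 \<le> h"
begin

abbreviation D :: nat where "D \<equiv> length hs"
abbreviation L :: nat where "L \<equiv> sum_list hs"

definition seg_start :: "nat \<Rightarrow> nat" where
  "seg_start j = sum_list (take j hs)"

definition seg_index :: "nat \<Rightarrow> nat" where
  "seg_index x = (GREATEST j. j \<le> D \<and> seg_start j \<le> x)"

definition key :: "nat \<Rightarrow> int" where
  "key x = (if even (seg_index x) then - int x else int x)"

definition seg_last :: "nat \<Rightarrow> bool" where
  "seg_last x \<longleftrightarrow> seg_index (Suc x) \<noteq> seg_index x"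

definition precedes :: "nat \<Rightarrow> nat \<Rightarrow> bool" where
  "precedes p q \<longleftrightarrow> p < L \<and> q < L \<and> key p < key q"

lemma seg_start_0 [simp]: "seg_start 0 = 0"
  by (simp add: seg_start_def)

lemma seg_start_Suc: "j < D \<Longrightarrow> seg_start (Suc j) = seg_start j + hs ! j"
  by (simp add: seg_start_def take_Suc_conv_app_nth)

lemma seg_start_length: "D \<le> j \<Longrightarrow> seg_start j = L"
  by (simp add: seg_start_def)

lemma seg_start_less_Suc:
  assumes "j < D"
  shows "seg_start j < seg_start (Suc j)"
proof -
  have "1 \<le> hs ! j" using pos assms by simp
  then show ?thesis using seg_start_Suc[OF assms] by simp
qed

lemma seg_start_mono: "j \<le> k \<Longrightarrow> seg_start j \<le> seg_start k"
proof (induction k)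
  case (Suc k)
  have "seg_start k \<le> seg_start (Suc k)"
    by (cases "k < D") (auto simp: seg_start_Suc seg_start_length)
  with Suc show ?case by (cases "j = Suc k") auto
qed simp

lemma seg_start_less: "j < k \<Longrightarrow> k \<le> D \<Longrightarrow> seg_start j < seg_start k"
  using seg_start_less_Suc[of j] seg_start_mono[of "Suc j" k] by simp

lemma seg_start_less_L: "j < D \<Longrightarrow> seg_start j < L"
  using seg_start_less[of j D] seg_start_length[of D] by simp

lemma L_pos: "0 < D \<Longrightarrow> 0 < L"
  using seg_start_less_L[of 0] by simp

lemma seg_index_spec: "seg_index x \<le> D \<and> seg_start (seg_index x) \<le> x"
  unfolding seg_index_def by (rule GreatestI_nat[of _ 0 D]) auto

lemma le_seg_index_iff: "j \<le> D \<Longrightarrow> j \<le> seg_index x \<longleftrightarrow> seg_start j \<le> x"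
proof
  assume "j \<le> seg_index x"
  then show "seg_start j \<le> x"
    using seg_index_spec[of x] seg_start_mono le_trans by blast
qed (auto simp: seg_index_def intro: Greatest_le_nat[of _ j D])

lemma seg_index_less_length: "x < L \<Longrightarrow> seg_index x < D"
  using seg_index_spec[of x] le_seg_index_iff[of D x] seg_start_length[of D]
  by (simp add: nat_less_le)

lemma less_L_if_seg_index_less: "seg_index x < D \<Longrightarrow> x < L"
  using le_seg_index_iff[of D x] seg_start_length[of D] by simp

lemma seg_index_eqI:
  "j < D \<Longrightarrow> seg_start j \<le> x \<Longrightarrow> x < seg_start (Suc j) \<Longrightarrow> seg_index x = j"
  using le_seg_index_iff[of j x] le_seg_index_iff[of "Suc j" x] by simp

lemma seg_index_seg_start: "j \<le> D \<Longrightarrow> seg_index (seg_start j) = j"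
  using le_seg_index_iff[of j "seg_start j"] le_seg_index_iff[of "Suc j" "seg_start j"]
    seg_start_less_Suc[of j] seg_index_spec[of "seg_start j"]
  by (cases "j = D") auto

lemma seg_index_mono: "x \<le> y \<Longrightarrow> seg_index x \<le> seg_index y"
  using le_seg_index_iff seg_index_spec by (meson order_trans)

lemma seg_index_Suc_le: "seg_index (Suc x) \<le> Suc (seg_index x)"
proof (rule ccontr)
  let ?j = "Suc (seg_index x)"
  assume "\<not> ?thesis"
  then have "Suc ?j \<le> D" and "seg_start (Suc ?j) \<le> Suc x"
    using seg_index_spec[of "Suc x"] le_seg_index_iff[of "Suc ?j" "Suc x"] by auto
  moreover have "x < seg_start ?j"
    using calculation(1) le_seg_index_iff[of ?j x] by simp
  ultimately show False
    using seg_start_less_Suc[of ?j] by simp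
qed

lemma seg_last_Suc: "seg_last x \<Longrightarrow> seg_index (Suc x) = Suc (seg_index x)"
  using seg_index_Suc_le[of x] seg_index_mono[of x "Suc x"] unfolding seg_last_def by simp

lemma seg_last_top: "0 < D \<Longrightarrow> seg_last (L - 1)"
  unfolding seg_last_def
  using seg_index_less_length[of "L - 1"] less_L_if_seg_index_less[of L]
    seg_start_less_L[of 0] by fastforce

lemma odd_seg_index_pos:
  assumes "odd (seg_index x)"
  shows "0 < x"
proof -
  have "0 < seg_index x" using assms by (rule odd_pos)
  then have "1 \<le> seg_index x" and "1 \<le> D"
    using seg_index_spec[of x] by linarith+
  then have "seg_start 1 \<le> x"
    using le_seg_index_iff by blast
  moreover have "seg_start 0 < seg_start 1"
    using seg_start_less_Suc[of 0] \<open>1 \<le> D\<close> by (simp add: Suc_le_eq)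
  ultimately show ?thesis by simp
qed

lemma key_less_if_even: "even (seg_index y) \<Longrightarrow> x < y \<Longrightarrow> key y < key x"
  by (simp add: key_def)

lemma key_less_if_odd: "odd (seg_index y) \<Longrightarrow> x < y \<Longrightarrow> key x < key y"
  by (simp add: key_def)

lemma key_less_if_even_odd: "even (seg_index x) \<Longrightarrow> odd (seg_index y) \<Longrightarrow> key x < key y"
  using odd_seg_index_pos[of y] by (simp add: key_def)

lemma seg_eq: "j < D \<Longrightarrow> seg hs j = [seg_start j..<seg_start (Suc j)]"
  by (simp add: seg_def seg_start_Suc) (simp add: seg_start_def)

lemma concat_map_seg_upt: "k \<le> D \<Longrightarrow> concat (map (seg hs) [0..<k]) = [0..<seg_start k]"
proof (induction k)
  case (Suc k)
  have "[0..<seg_start k] @ [seg_start k..<seg_start (Suc k)] = [0..<seg_start (Suc k)]"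
    using upt_add_eq_append[of 0 "seg_start k" "seg_start (Suc k) - seg_start k"]
      seg_start_mono[of k "Suc k"] by simp
  with Suc show ?case by (simp add: seg_eq)
qed simp

lemma concat_map_seg_filter:
  "concat (map (seg hs) (filter P [0..<D])) = filter (\<lambda>x. P (seg_index x)) [0..<L]"
proof -
  have seg_filter: "filter (\<lambda>x. P (seg_index x)) (seg hs j) = (if P j then seg hs j else [])"
    if "j < D" for j
    using that seg_index_eqI[of j] by (auto simp: seg_eq)
  have "[0..<L] = concat (map (seg hs) [0..<D])"
    using concat_map_seg_upt[of D] seg_start_length[of D] by simp
  then have "filter (\<lambda>x. P (seg_index x)) [0..<L] =
      concat (map (\<lambda>j. filter (\<lambda>x. P (seg_index x)) (seg hs j)) [0..<D])"
    by (simp add: filter_concat o_def)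
  also have "\<dots> = concat (map (\<lambda>j. if P j then seg hs j else []) [0..<D])"
    by (rule arg_cong[where f = concat], rule map_cong) (simp_all add: seg_filter)
  finally show ?thesis
    by (simp add: concat_map_if_Nil)
qed

lemma spiral_eq:
  "spiral hs = rev (filter (\<lambda>x. even (seg_index x)) [0..<L]) @ filter (\<lambda>x. odd (seg_index x)) [0..<L]"
  unfolding spiral_def concat_map_seg_filter[of even, symmetric]
    concat_map_seg_filter[of odd, symmetric]
  by (simp add: rev_concat rev_map o_def)

lemma set_spiral: "set (spiral hs) = {0..<L}"
  by (auto simp: spiral_eq)

lemma sorted_spiral: "sorted_wrt (\<lambda>x y. key x < key y) (spiral hs)"
proof -
  have "sorted_wrt (\<lambda>x y. key y < key x) (filter (\<lambda>x. even (seg_index x)) [0..<L])"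
    by (rule sorted_wrt_mono_rel[OF _ sorted_wrt_filter[OF sorted_wrt_upt]])
      (simp add: key_less_if_even)
  moreover have "sorted_wrt (\<lambda>x y. key x < key y) (filter (\<lambda>x. odd (seg_index x)) [0..<L])"
    by (rule sorted_wrt_mono_rel[OF _ sorted_wrt_filter[OF sorted_wrt_upt]])
      (simp add: key_less_if_odd)
  ultimately show ?thesis
    unfolding spiral_eq sorted_wrt_append sorted_wrt_rev by (auto intro: key_less_if_even_odd)
qed

lemma allowed_spiral_iff:
  "allowed N (spiral hs) \<longleftrightarrow> (\<exists>\<omega>. (\<forall>n. \<omega> n < N) \<and> defines_order L key \<omega>)"
  by (rule allowed_iff_defines_order[OF sorted_spiral set_spiral])

lemma allowed_spiral_mirror_iff:
  "allowed N (spiral_mirror hs) \<longleftrightarrow> (\<exists>\<omega>. (\<forall>n. \<omega> n < N) \<and> defines_order L key \<omega>)"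
proof -
  have sorted: "sorted_wrt (\<lambda>x y. - key x < - key y) (spiral_mirror hs)"
    unfolding spiral_mirror_eq_rev sorted_wrt_rev using sorted_spiral by simp
  have set: "set (spiral_mirror hs) = {0..<L}"
    by (simp add: spiral_mirror_eq_rev set_spiral)
  show ?thesis
    unfolding allowed_iff_defines_order[OF sorted set] by (rule ex_defines_order_reverse_iff)
qed

section \<open>Forbidden spiralling patterns\<close>

lemma defines_orderD:
  "defines_order L key \<omega> \<Longrightarrow> precedes p q \<Longrightarrow> lex_less (shift p \<omega>) (shift q \<omega>)"
  unfolding defines_order_def precedes_def by blast

lemma defines_order_le: "defines_order L key \<omega> \<Longrightarrow> precedes p q \<Longrightarrow> \<omega> p \<le> \<omega> q"
  by (rule lex_less_shift_imp_le) (rule defines_orderD)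

lemma defines_order_less:
  assumes "defines_order L key \<omega>" and "precedes p q" and "precedes (Suc q) (Suc p)"
  shows "\<omega> p < \<omega> q"
proof -
  have "lex_less (shift p \<omega>) (shift q \<omega>)" and "lex_less (shift (Suc q) \<omega>) (shift (Suc p) \<omega>)"
    using assms defines_orderD by blast+
  then show ?thesis
    using lex_less_shift_iff[of p \<omega> q] lex_less_asym by auto
qed

lemma defines_order_seg_last:
  assumes order: "defines_order L key \<omega>"
    and last: "seg_last t" and "Suc t < L" and "x < t"
  shows "if even (seg_index t) then \<omega> t < \<omega> x else \<omega> x < \<omega> t"
proof -
  have Suc_t: "seg_index (Suc t) = Suc (seg_index t)"
    using last by (rule seg_last_Suc)
  show ?thesis
  proof (cases "even (seg_index t)")
    case True
    then have "precedes t x" and "precedes (Suc x) (Suc t)"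
      using assms key_less_if_even[of t x] key_less_if_odd[of "Suc t" "Suc x"] Suc_t
      by (auto simp: precedes_def)
    with True show ?thesis
      using defines_order_less[OF order] by simp
  next
    case False
    then have "precedes x t" and "precedes (Suc t) (Suc x)"
      using assms key_less_if_odd[of t x] key_less_if_even[of "Suc t" "Suc x"] Suc_t
      by (auto simp: precedes_def)
    with False show ?thesis
      using defines_order_less[OF order] by simp
  qed
qed

text \<open>\<open>last_before m\<close> is the last position of segment \<open>m - 1\<close>; truncated subtraction gives
  \<open>last_before 0 = 0\<close>, the reference position of the base case below.\<close>

definition last_before :: "nat \<Rightarrow> nat" where
  "last_before m = seg_start m - 1"

lemma Suc_last_before: "0 < m \<Longrightarrow> m \<le> D \<Longrightarrow> Suc (last_before m) = seg_start m"
  using seg_start_less[of 0 m] by (simp add: last_before_def)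

lemma seg_index_last_before: "0 < m \<Longrightarrow> m \<le> D \<Longrightarrow> seg_index (last_before m) = m - 1"
  using seg_index_eqI[of "m - 1" "last_before m"] seg_start_less[of "m - 1" m] Suc_last_before[of m]
  by simp

lemma seg_last_last_before: "0 < m \<Longrightarrow> m \<le> D \<Longrightarrow> seg_last (last_before m)"
  unfolding seg_last_def
  using Suc_last_before seg_index_last_before seg_index_seg_start by simp

lemma last_before_less_last_before:
  assumes "2 \<le> hs ! 0" and "Suc m \<le> D"
  shows "last_before (m - 1) < last_before (Suc m)"
proof (cases m)
  case 0
  have "hs \<noteq> []" using assms(2) by auto
  with 0 show ?thesis
    using assms(1) seg_start_Suc[of 0] by (simp add: last_before_def)
next
  case (Suc k)
  then show ?thesis
    using assms seg_start_less[of k "Suc k"] seg_start_less[of "Suc k" "Suc (Suc k)"]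
    by (simp add: last_before_def)
qed

lemma defines_order_last_before_step:
  assumes order: "defines_order L key \<omega>" and h0: "2 \<le> hs ! 0" and m: "Suc m < D"
  shows "if even m then \<omega> (last_before (Suc m)) < \<omega> (last_before (m - 1))
         else \<omega> (last_before (m - 1)) < \<omega> (last_before (Suc m))"
proof -
  have "Suc (last_before (Suc m)) < L"
    using m Suc_last_before[of "Suc m"] seg_start_less_L[of "Suc m"] by simp
  with m last_before_less_last_before[OF h0, of m] show ?thesis
    using defines_order_seg_last[OF order seg_last_last_before[of "Suc m"]]
      seg_index_last_before[of "Suc m"] by simp
qed

lemma defines_order_spread:
  assumes order: "defines_order L key \<omega>" and h0: "2 \<le> hs ! 0"
  shows "1 \<le> m \<Longrightarrow> m < D \<Longrightarrow>
    if odd m then \<omega> (last_before m) + m \<le> \<omega> (last_before (m - 1))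
    else \<omega> (last_before (m - 1)) + m \<le> \<omega> (last_before m)"
proof (induction m rule: nat_induct_at_least)
  case base
  then show ?case
    using defines_order_last_before_step[OF order h0, of 0] by simp
next
  case (Suc m)
  then show ?case
    using defines_order_last_before_step[OF order h0, of m] by (cases "even m") auto
qed

lemma defines_order_length_le:
  assumes order: "defines_order L key \<omega>" and bound: "\<forall>n. \<omega> n < N"
    and h0: "2 \<le> hs ! 0" and D: "2 \<le> D"
  shows "D \<le> N"
proof -
  have "1 \<le> D - 1" "D - 1 < D"
    using D by simp_all
  then have "\<omega> (last_before (D - 1)) + (D - 1) \<le> \<omega> (last_before (D - 1 - 1)) \<or>
      \<omega> (last_before (D - 1 - 1)) + (D - 1) \<le> \<omega> (last_before (D - 1))"
    using defines_order_spread[OF order h0] by meson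
  then show ?thesis
    using bound[rule_format, of "last_before (D - 1)"] bound[rule_format, of "last_before (D - 1 - 1)"]
    by linarith
qed

lemma defines_order_length_less:
  assumes order: "defines_order L key \<omega>" and bound: "\<forall>n. \<omega> n < N"
    and h0: "2 \<le> hs ! 0" and D: "2 \<le> D" and last: "2 \<le> last hs"
  shows "D < N"
proof (rule ccontr)
  define J where "J = D - 1"
  define x where "x = L - 2"
  assume "\<not> D < N"
  with defines_order_length_le[OF order bound h0 D] D have N: "N = Suc J"
    unfolding J_def by simp
  have J: "1 \<le> J" "J < D" "Suc J = D"
    using D by (auto simp: J_def)
  have "hs \<noteq> []" using D by auto
  then have "hs ! J = last hs"
    by (simp add: J_def last_conv_nth)
  then have "seg_start J + 2 \<le> L"
    using seg_start_Suc[of J] seg_start_length[of "Suc J"] J last by simp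
  then have idx: "seg_index x = J" "seg_index (Suc x) = J" and "Suc x < L"
    using seg_index_eqI[of J] seg_start_Suc[of J] seg_start_length[of "Suc J"] J
    by (auto simp: x_def)
  have before: "last_before (J - 1) < x"
    using \<open>seg_start J + 2 \<le> L\<close> seg_start_less[of "J - 1" J] J
    by (simp add: last_before_def x_def)
  have spread: "if odd J then \<omega> (last_before J) + J \<le> \<omega> (last_before (J - 1))
      else \<omega> (last_before (J - 1)) + J \<le> \<omega> (last_before J)"
    using defines_order_spread[OF order h0 J(1,2)] .
  have "last_before (J - 1) < L" "x < L"
    using before \<open>Suc x < L\<close> by simp_all
  show False
  proof (cases "even J")
    case True
    then have "\<omega> (last_before (J - 1)) = 0"
      using spread bound[rule_format, of "last_before J"] N by simp
    moreover have "precedes x (last_before (J - 1))" and "precedes (Suc x) x"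
      using True idx before key_less_if_even[of x] key_less_if_even[of "Suc x" x]
        \<open>Suc x < L\<close> \<open>x < L\<close> by (simp_all add: precedes_def)
    ultimately show False
      using defines_order_le[OF order] defines_orderD[OF order]
        not_lex_less_shift_Suc_if_zero[of \<omega> x] by fastforce
  next
    case False
    then have "\<omega> (last_before (J - 1)) = N - 1"
      using spread bound[rule_format, of "last_before (J - 1)"] N by simp
    moreover have "precedes (last_before (J - 1)) x" and "precedes x (Suc x)"
      using False idx before key_less_if_odd[of x] key_less_if_odd[of "Suc x" x]
        \<open>Suc x < L\<close> \<open>x < L\<close> by (simp_all add: precedes_def)
    moreover have "\<omega> x < N" using bound by simp
    ultimately show False
      using defines_order_le[OF order] defines_orderD[OF order]
        not_lex_less_shift_Suc_if_max[OF bound, of x] by fastforce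
  qed
qed

section \<open>Allowed spiralling patterns\<close>

text \<open>Ties are passed on to the successors, which move towards the end of the word, so the
  induction on \<open>L - p\<close> terminates.\<close>

lemma defines_order_if_tie_step:
  assumes step: "\<And>p q. precedes p q \<Longrightarrow> \<omega> p < \<omega> q \<or> (\<omega> p = \<omega> q \<and>
      (precedes (Suc p) (Suc q) \<or> lex_less (shift (Suc p) \<omega>) (shift (Suc q) \<omega>)))"
  shows "defines_order L key \<omega>"
proof -
  have "\<forall>p q. L - p \<le> n \<longrightarrow> precedes p q \<longrightarrow> lex_less (shift p \<omega>) (shift q \<omega>)" for n
  proof (induction n)
    case 0
    then show ?case by (auto simp: precedes_def)
  next
    case (Suc n)
    show ?case
    proof (intro allI impI)
      fix p q assume "L - p \<le> Suc n" and pq: "precedes p q"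
      then have "precedes (Suc p) (Suc q) \<longrightarrow> lex_less (shift (Suc p) \<omega>) (shift (Suc q) \<omega>)"
        using Suc.IH by (simp add: precedes_def)
      with step[OF pq] show "lex_less (shift p \<omega>) (shift q \<omega>)"
        using lex_less_shift_iff[of p \<omega> q] by blast
    qed
  qed
  then show ?thesis
    unfolding defines_order_def precedes_def by blast
qed

lemma precedes_odd_imp_odd: "precedes p q \<Longrightarrow> odd (seg_index p) \<Longrightarrow> odd (seg_index q)"
  using odd_seg_index_pos[of p] by (auto simp: precedes_def key_def split: if_splits)

lemma precedes_from_top: "precedes (L - 1) q \<Longrightarrow> even (seg_index (L - 1))"
  by (auto simp: precedes_def key_def split: if_splits)

lemma precedes_to_top: "precedes p (L - 1) \<Longrightarrow> odd (seg_index (L - 1))"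
  by (auto simp: precedes_def key_def split: if_splits)

text \<open>The witness words: even segments descend from the level \<open>a\<close> and odd segments ascend
  from it, one step for every two segments, and a marked symbol (the last one of its segment)
  already takes the level of the next segment on its side.\<close>

definition depth :: "(nat \<Rightarrow> bool) \<Rightarrow> nat \<Rightarrow> nat" where
  "depth l x = seg_index x div 2 + (if l x then 1 else 0)"

definition level :: "int \<Rightarrow> (nat \<Rightarrow> bool) \<Rightarrow> nat \<Rightarrow> int" where
  "level a l x = (if even (seg_index x) then a - int (depth l x) else a + int (depth l x))"

definition level_word :: "int \<Rightarrow> (nat \<Rightarrow> bool) \<Rightarrow> nat \<Rightarrow> nat" where
  "level_word a l x = nat (level a l (min x (L - 1)))"

lemma level_word_less: "x < L \<Longrightarrow> level_word a l x = nat (level a l x)"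
  by (simp add: level_word_def)

lemma level_word_ge: "L - 1 \<le> x \<Longrightarrow> level_word a l x = nat (level a l (L - 1))"
  by (simp add: level_word_def)

context
  fixes l :: "nat \<Rightarrow> bool"
  assumes marks: "\<And>x. Suc x < L \<Longrightarrow> l x \<longleftrightarrow> seg_last x"
begin

lemma depth_mono:
  assumes "x < y" and "y < L" and parity: "even (seg_index x) \<longleftrightarrow> even (seg_index y)"
  shows "depth l x + (if l y then 1 else 0) \<le> depth l y"
proof -
  have le: "seg_index x \<le> seg_index y"
    using assms(1) seg_index_mono by simp
  show ?thesis
  proof (cases "seg_index x = seg_index y")
    case True
    have "\<not> l x"
    proof
      assume "l x"
      then have "seg_index (Suc x) = Suc (seg_index x)"
        using marks[of x] assms(1,2) seg_last_Suc by simp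
      moreover have "seg_index (Suc x) \<le> seg_index y"
        using assms(1) seg_index_mono by simp
      ultimately show False using True by simp
    qed
    with True show ?thesis by (simp add: depth_def)
  next
    case False
    with le parity have "seg_index x div 2 + 1 \<le> seg_index y div 2"
      by presburger
    then show ?thesis by (simp add: depth_def)
  qed
qed

lemma level_mono:
  assumes pq: "precedes p q"
  shows "level a l p \<le> level a l q"
proof -
  have L: "p < L" "q < L"
    using pq by (simp_all add: precedes_def)
  consider "even (seg_index p)" "even (seg_index q)" | "even (seg_index p)" "odd (seg_index q)"
    | "odd (seg_index p)" "odd (seg_index q)"
    using precedes_odd_imp_odd[OF pq] by blast
  then show ?thesis
  proof cases
    case 1
    then have "q < p"
      using pq by (simp add: precedes_def key_def)
    then have "depth l q \<le> depth l p"
      using depth_mono[of q p] L 1 by simp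
    with 1 show ?thesis by (simp add: level_def)
  next
    case 2
    then show ?thesis by (simp add: level_def)
  next
    case 3
    then have "p < q"
      using pq by (simp add: precedes_def key_def)
    then have "depth l p \<le> depth l q"
      using depth_mono[of p q] L 3 by simp
    with 3 show ?thesis by (simp add: level_def)
  qed
qed

lemma level_eq_imp_unmarked:
  assumes "x < y" and "y < L" and "level a l x = level a l y"
  shows "\<not> l y"
proof (cases "even (seg_index x) \<longleftrightarrow> even (seg_index y)")
  case True
  then show ?thesis
    using depth_mono[OF assms(1,2) True] assms(3) by (auto simp: level_def split: if_splits)
next
  case False
  then have "depth l y = 0"
    using assms(3) by (auto simp: level_def split: if_splits)
  then show ?thesis by (simp add: depth_def split: if_splits)
qed

lemma level_eq_next:
  assumes pq: "precedes p q" and eq: "level a l p = level a l q"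
    and "Suc p \<noteq> L" and "Suc q \<noteq> L"
  shows "precedes (Suc p) (Suc q)"
proof -
  have L: "Suc p < L" "Suc q < L"
    using pq assms(3,4) by (auto simp: precedes_def)
  have stay: "seg_index (Suc x) = seg_index x" if "\<not> l x" "Suc x < L" for x
    using that marks[of x] by (simp add: seg_last_def)
  consider "even (seg_index p)" "even (seg_index q)" | "even (seg_index p)" "odd (seg_index q)"
    | "odd (seg_index p)" "odd (seg_index q)"
    using precedes_odd_imp_odd[OF pq] by blast
  then show ?thesis
  proof cases
    case 1
    then have "q < p"
      using pq by (simp add: precedes_def key_def)
    then have "\<not> l p"
      using level_eq_imp_unmarked[of q p a] eq pq by (simp add: precedes_def)
    with 1 \<open>q < p\<close> show ?thesis
      using L stay key_less_if_even[of "Suc p" "Suc q"] by (simp add: precedes_def)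
  next
    case 2
    then have "\<not> l p" "\<not> l q"
      using eq by (auto simp: level_def depth_def split: if_splits)
    with 2 show ?thesis
      using L stay key_less_if_even_odd[of "Suc p" "Suc q"] by (simp add: precedes_def)
  next
    case 3
    then have "p < q"
      using pq by (simp add: precedes_def key_def)
    then have "\<not> l q"
      using level_eq_imp_unmarked[of p q a] eq pq by (simp add: precedes_def)
    with 3 \<open>p < q\<close> show ?thesis
      using L stay key_less_if_odd[of "Suc q" "Suc p"] by (simp add: precedes_def)
  qed
qed

lemma defines_order_level_word:
  assumes nonneg: "\<And>x. x < L \<Longrightarrow> 0 \<le> level a l x"
    and top: "\<And>p q. precedes p q \<Longrightarrow> level a l p = level a l q \<Longrightarrow> Suc p = L \<or> Suc q = L \<Longrightarrow>
      lex_less (shift (Suc p) (level_word a l)) (shift (Suc q) (level_word a l))"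
  shows "defines_order L key (level_word a l)"
proof (rule defines_order_if_tie_step)
  fix p q assume pq: "precedes p q"
  then have "p < L" "q < L" by (simp_all add: precedes_def)
  then have word: "level_word a l p = nat (level a l p)" "level_word a l q = nat (level a l q)"
    and "0 \<le> level a l p"
    using nonneg by (simp_all add: level_word_less)
  show "level_word a l p < level_word a l q \<or> (level_word a l p = level_word a l q \<and>
      (precedes (Suc p) (Suc q) \<or>
       lex_less (shift (Suc p) (level_word a l)) (shift (Suc q) (level_word a l))))"
  proof (cases "level a l p = level a l q")
    case True
    then have "level_word a l p = level_word a l q"
      using word by simp
    moreover have "precedes (Suc p) (Suc q) \<or>
        lex_less (shift (Suc p) (level_word a l)) (shift (Suc q) (level_word a l))"
      proof (cases "Suc p = L \<or> Suc q = L")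
      case True
      then show ?thesis using top[OF pq \<open>level a l p = level a l q\<close>] by blast
    next
      case False
      then show ?thesis using level_eq_next[OF pq \<open>level a l p = level a l q\<close>] by blast
    qed
    ultimately show ?thesis by blast
  next
    case False
    with level_mono[OF pq, of a] have "level a l p < level a l q" by simp
    then have "level_word a l p < level_word a l q"
      using word \<open>0 \<le> level a l p\<close> by (simp only: nat_less_eq_zless)
    then show ?thesis by blast
  qed
qed

end

lemma level_seg_last_range:
  assumes "x < L"
  shows "0 \<le> level (int ((D + 1) div 2)) seg_last x \<and> level (int ((D + 1) div 2)) seg_last x \<le> int D"
proof -
  define k where "k = seg_index x"
  have "k < D"
    using seg_index_less_length[OF assms] by (simp add: k_def)
  then have "k div 2 + 1 \<le> (D + 1) div 2" and "odd k \<Longrightarrow> (D + 1) div 2 + k div 2 + 1 \<le> D"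
    by presburger+
  moreover have "depth seg_last x \<le> k div 2 + 1"
    by (simp add: depth_def k_def)
  ultimately show ?thesis
    unfolding level_def k_def[symmetric] by (cases "even k") auto
qed

lemma exists_defines_order_if_length_less:
  assumes "2 \<le> D" and "D < N"
  shows "\<exists>\<omega>. (\<forall>n. \<omega> n < N) \<and> defines_order L key \<omega>"
proof -
  define a where "a = int ((D + 1) div 2)"
  have marks: "\<And>x. Suc x < L \<Longrightarrow> seg_last x \<longleftrightarrow> seg_last x" ..
  have "hs \<noteq> []"
    using assms(1) by auto
  then have "0 < L" and "seg_last (L - 1)"
    using L_pos seg_last_top by simp_all
  \<comment> \<open>The top position is marked, so no earlier position shares its level.\<close>
  then have top_unique: "level a seg_last x \<noteq> level a seg_last (L - 1)" if "x < L - 1" for x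
    using level_eq_imp_unmarked[OF marks that, of a] by auto
  have "defines_order L key (level_word a seg_last)"
  proof (rule defines_order_level_word[OF marks])
    show "0 \<le> level a seg_last x" if "x < L" for x
      using level_seg_last_range[OF that] by (simp add: a_def)
    show "lex_less (shift (Suc p) (level_word a seg_last)) (shift (Suc q) (level_word a seg_last))"
      if "precedes p q" "level a seg_last p = level a seg_last q" "Suc p = L \<or> Suc q = L" for p q
    proof -
      have "p \<noteq> q" "p < L" "q < L"
        using that(1) by (auto simp: precedes_def)
      with that(3) have "p = L - 1 \<and> q < L - 1 \<or> q = L - 1 \<and> p < L - 1"
        by auto
      with that(2) top_unique[of p] top_unique[of q] show ?thesis
        by auto
    qed
  qed
  moreover have "level_word a seg_last n < N" for n
  proof -
    have "min n (L - 1) < L"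
      using \<open>0 < L\<close> by simp
    with level_seg_last_range[of "min n (L - 1)"] assms(2) show ?thesis
      unfolding level_word_def a_def by linarith
  qed
  ultimately show ?thesis by blast
qed

text \<open>With a singleton last segment its position \<open>L - 1\<close> is left unmarked; its level is then
  an extreme value, which the tail of the word repeats forever.\<close>

definition inner_last :: "nat \<Rightarrow> bool" where
  "inner_last x \<longleftrightarrow> seg_last x \<and> Suc x < L"

definition last_one_word :: "nat \<Rightarrow> nat" where
  "last_one_word = level_word (int (D div 2)) inner_last"

context
  assumes two: "2 \<le> D" and last_one: "last hs = 1"
begin

lemma seg_start_top: "seg_start (D - 1) = L - 1"
proof -
  have "hs \<noteq> []"
    using two by auto
  then have "hs ! (D - 1) = 1"
    using last_one by (simp add: last_conv_nth)
  moreover have "Suc (D - 1) = D"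
    using two by simp
  ultimately show ?thesis
    using seg_start_Suc[of "D - 1"] seg_start_length[of D] by simp
qed

lemma two_le_L: "2 \<le> L"
  using seg_start_less[of 0 "D - 1"] seg_start_top two by simp

lemma seg_index_top: "seg_index (L - 1) = D - 1"
  using seg_index_seg_start[of "D - 1"] seg_start_top by simp

lemma seg_index_below_top: "x < L - 1 \<Longrightarrow> seg_index x < D - 1"
  using le_seg_index_iff[of "D - 1" x] seg_start_top by simp

lemma before_top: "seg_index (L - 2) = D - 2" "inner_last (L - 2)"
proof -
  have "L - 2 = last_before (D - 1)"
    using seg_start_top by (simp add: last_before_def)
  moreover have "0 < D - 1" "D - 1 \<le> D"
    using two by simp_all
  ultimately show "seg_index (L - 2) = D - 2" "inner_last (L - 2)"
    using seg_index_last_before[of "D - 1"] seg_last_last_before[of "D - 1"] two_le_L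
    by (simp_all add: inner_last_def)
qed

lemma level_top:
  "level (int (D div 2)) inner_last (L - 1) = (if even (D - 1) then 0 else int (D - 1))"
proof -
  define J where "J = D - 1"
  have D: "D = J + 1"
    using two by (simp add: J_def)
  have "\<not> inner_last (L - 1)"
    using two_le_L by (simp add: inner_last_def)
  then have "depth inner_last (L - 1) = J div 2"
    using seg_index_top by (simp add: depth_def J_def)
  moreover have "even J \<Longrightarrow> int ((J + 1) div 2) - int (J div 2) = 0"
    and "odd J \<Longrightarrow> int ((J + 1) div 2) + int (J div 2) = int J"
    by presburger+
  ultimately show ?thesis
    unfolding J_def[symmetric] D level_def using seg_index_top by (simp add: J_def)
qed

lemma level_before_top:
  "level (int (D div 2)) inner_last (L - 2) = (if even (D - 1) then int (D - 1) else 0)"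
proof -
  define J where "J = D - 1"
  have D: "D = J + 1" "1 \<le> J"
    using two by (simp_all add: J_def)
  have "depth inner_last (L - 2) = (J - 1) div 2 + 1"
    using before_top by (simp add: depth_def J_def)
  moreover have "seg_index (L - 2) = J - 1"
    using before_top by (simp add: J_def)
  moreover have "even J \<Longrightarrow> int ((J + 1) div 2) + int ((J - 1) div 2 + 1) = int J"
    and "odd J \<Longrightarrow> int ((J + 1) div 2) - int ((J - 1) div 2 + 1) = 0"
    and "even (J - 1) \<longleftrightarrow> odd J"
    using D(2) by presburger+
  ultimately show ?thesis
    unfolding J_def[symmetric] D(1) level_def by simp
qed

lemma level_range:
  assumes "x < L"
  shows "0 \<le> level (int (D div 2)) inner_last x \<and> level (int (D div 2)) inner_last x \<le> int (D - 1)"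
proof (cases "x = L - 1")
  case True
  then show ?thesis using level_top by simp
next
  case False
  define k where "k = seg_index x"
  define J where "J = D - 1"
  have D: "D = J + 1"
    using two by (simp add: J_def)
  have "k < J"
    using False assms seg_index_below_top by (simp add: k_def J_def)
  then have "even k \<Longrightarrow> k div 2 + 1 \<le> (J + 1) div 2"
    and "odd k \<Longrightarrow> (J + 1) div 2 + k div 2 + 1 \<le> J"
    and "(J + 1) div 2 \<le> J"
    by presburger+
  moreover have "depth inner_last x \<le> k div 2 + 1"
    by (simp add: depth_def k_def)
  ultimately show ?thesis
    unfolding level_def k_def[symmetric] J_def[symmetric] D by (cases "even k") auto
qed

lemma last_one_word_le: "last_one_word n \<le> D - 1"
proof -
  have "min n (L - 1) < L"
    using two_le_L by simp
  then show ?thesis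
    using level_range[of "min n (L - 1)"] unfolding last_one_word_def level_word_def by linarith
qed

lemma shift_last_one_word_top:
  "shift L last_one_word = (\<lambda>_. if even (D - 1) then 0 else D - 1)"
proof -
  have "last_one_word n = nat (level (int (D div 2)) inner_last (L - 1))" if "L - 1 \<le> n" for n
    using that by (simp add: last_one_word_def level_word_ge)
  moreover have "nat (level (int (D div 2)) inner_last (L - 1)) = (if even (D - 1) then 0 else D - 1)"
    by (simp only: level_top) simp
  ultimately show ?thesis
    by (simp add: shift_def)
qed

lemma last_one_word_before_top: "last_one_word (L - 2) = (if even (D - 1) then D - 1 else 0)"
  using two_le_L level_before_top by (simp add: last_one_word_def level_word_less)

lemma lex_less_from_top:
  assumes "even (D - 1)" and "q < L - 1" and "level (int (D div 2)) inner_last q = 0"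
  shows "lex_less (shift L last_one_word) (shift (Suc q) last_one_word)"
proof -
  have "q \<noteq> L - 2"
    using assms(1,3) level_before_top two by auto
  with assms(2) have "Suc q \<le> L - 2"
    by simp
  then have "shift (Suc q) last_one_word (L - 2 - Suc q) = last_one_word (L - 2)"
    by (rule shift_diff)
  also have "\<dots> = D - 1"
    using last_one_word_before_top assms(1) by simp
  finally have "lex_less (\<lambda>_. 0) (shift (Suc q) last_one_word)"
    using two lex_less_const_zero[of "shift (Suc q) last_one_word" "L - 2 - Suc q"] by simp
  with assms(1) show ?thesis
    by (simp add: shift_last_one_word_top)
qed

lemma lex_less_to_top:
  assumes "odd (D - 1)" and "p < L - 1" and "level (int (D div 2)) inner_last p = int (D - 1)"
  shows "lex_less (shift (Suc p) last_one_word) (shift L last_one_word)"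
proof -
  have "p \<noteq> L - 2"
    using assms(1,3) level_before_top two by auto
  with assms(2) have "Suc p \<le> L - 2"
    by simp
  then have "shift (Suc p) last_one_word (L - 2 - Suc p) = last_one_word (L - 2)"
    by (rule shift_diff)
  also have "\<dots> = 0"
    using last_one_word_before_top assms(1) by simp
  finally have "shift (Suc p) last_one_word (L - 2 - Suc p) = 0" .
  moreover have "\<forall>n. shift (Suc p) last_one_word n \<le> D - 1"
    using last_one_word_le by (simp add: shift_def)
  ultimately have "lex_less (shift (Suc p) last_one_word) (\<lambda>_. D - 1)"
    using two lex_less_const_top[of "shift (Suc p) last_one_word" "D - 1" "L - 2 - Suc p"] by simp
  with assms(1) show ?thesis
    by (simp add: shift_last_one_word_top)
qed

lemma exists_defines_order_if_last_one:
  assumes "D \<le> N"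
  shows "\<exists>\<omega>. (\<forall>n. \<omega> n < N) \<and> defines_order L key \<omega>"
proof -
  have marks: "\<And>x. Suc x < L \<Longrightarrow> inner_last x \<longleftrightarrow> seg_last x"
    by (simp add: inner_last_def)
  have "defines_order L key last_one_word"
    unfolding last_one_word_def
  proof (rule defines_order_level_word[OF marks])
    show "0 \<le> level (int (D div 2)) inner_last x" if "x < L" for x
      using level_range[OF that] by simp
    fix p q
    assume pq: "precedes p q"
      and eq: "level (int (D div 2)) inner_last p = level (int (D div 2)) inner_last q"
      and top: "Suc p = L \<or> Suc q = L"
    have "p \<noteq> q" "p < L" "q < L"
      using pq by (auto simp: precedes_def)
    with top consider "p = L - 1" "q < L - 1" | "q = L - 1" "p < L - 1"
      by linarith
    then show "lex_less (shift (Suc p) (level_word (int (D div 2)) inner_last))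
        (shift (Suc q) (level_word (int (D div 2)) inner_last))"
    proof cases
      case 1
      then have "even (D - 1)"
        using precedes_from_top pq seg_index_top by metis
      with 1 eq show ?thesis
        using lex_less_from_top[of q] level_top two_le_L by (simp add: last_one_word_def)
    next
      case 2
      then have "odd (D - 1)"
        using precedes_to_top pq seg_index_top by metis
      with 2 eq show ?thesis
        using lex_less_to_top[of p] level_top two_le_L by (simp add: last_one_word_def)
    qed
  qed
  moreover have "last_one_word n < N" for n
    using last_one_word_le[of n] assms two by linarith
  ultimately show ?thesis by blast
qed

end

lemma ex_defines_order_iff:
  assumes h0: "2 \<le> hs ! 0" and two: "2 \<le> D"
  shows "(\<exists>\<omega>. (\<forall>n. \<omega> n < N) \<and> defines_order L key \<omega>) \<longleftrightarrow>
    (if last hs = 1 then D \<le> N else D < N)"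
proof
  assume "\<exists>\<omega>. (\<forall>n. \<omega> n < N) \<and> defines_order L key \<omega>"
  then obtain \<omega> where bound: "\<forall>n. \<omega> n < N" and order: "defines_order L key \<omega>"
    by blast
  have "hs \<noteq> []"
    using two by auto
  then have "1 \<le> last hs"
    using pos by simp
  then show "if last hs = 1 then D \<le> N else D < N"
    using defines_order_length_le[OF order bound h0 two]
      defines_order_length_less[OF order bound h0 two] by simp
next
  assume "if last hs = 1 then D \<le> N else D < N"
  then show "\<exists>\<omega>. (\<forall>n. \<omega> n < N) \<and> defines_order L key \<omega>"
    using exists_defines_order_if_last_one[OF two] exists_defines_order_if_length_less[OF two]
    by (cases "last hs = 1") simp_all
qed

end

theorem lemma1:
  fixes N :: nat and hs :: "nat list" and \<pi> :: "nat list"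
  assumes "N \<ge> 2"
    and "length hs \<ge> 2"
    and "\<forall>h\<in>set hs. h \<ge> 1"
    and "hs ! 0 \<ge> 2"
    and "\<pi> = spiral hs \<or> \<pi> = spiral_mirror hs"
  shows "forbidden N \<pi> \<longleftrightarrow>
           ((length hs \<ge> N \<and> last hs \<ge> 2) \<or> (length hs \<ge> N + 1 \<and> last hs = 1))"
proof -
  interpret spiral_partition hs
    using assms(3) by unfold_locales
  have "hs \<noteq> []"
    using assms(2) by auto
  then have "1 \<le> last hs"
    using assms(3) by simp
  moreover have "allowed N \<pi> \<longleftrightarrow> (if last hs = 1 then length hs \<le> N else length hs < N)"
    using assms(5) allowed_spiral_iff allowed_spiral_mirror_iff ex_defines_order_iff[OF assms(4,2)]
    by blast
  ultimately show ?thesis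
    unfolding forbidden_def by (cases "last hs = 1") auto
qed

end
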